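(* (i) Every positive integer $N\equiv 1\pmod 8$ can be written as $N=x^2+P$ with $x$ a nonnegative integer and $P$ a practical number. (ii) For every $j\in\{0,2,3,4,5,6,7\}$ there exist infinitely many nonnegative integers $k$ such that $8k+j$ cannot be written as $x^2+P$ with $x$ a nonnegative integer and $P$ a practical number.
   Context: A positive integer $N$ is called a practical number if every integer in $[1,N]$ can be expressed as a sum of distinct positive divisors of $N$. *)

theory Defs
  imports Main
begin

definition practical :: "nat \<Rightarrow> bool" where
  "practical N \<longleftrightarrow> N > 0 \<and>
     (\<forall>m\<in>{1..N}. \<exists>S. S \<subseteq> {d. d > 0 \<and> d dvd N} \<and> \<Sum>S = m)"

end

theory Submission
  imports Defs "HOL-Computational_Algebra.Primes"
begin

text \<open>
  If \<open>N \<equiv> 1 (mod 8)\<close> and \<open>4^(b+1) < N \<le> 4^(b+2)\<close>, Hensel lifting shows that \<open>N\<close> is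
  a square modulo \<open>2^(b+2)\<close>, with a root \<open>x < 2^(b+1)\<close>. Then \<open>P = N - x\<^sup>2\<close> is a positive
  multiple of \<open>2^(b+2)\<close> not exceeding \<open>2^(2b+5)\<close>, and every such number is practical: it has the form
  \<open>2^a m\<close> with \<open>m\<close> odd and \<open>m \<le> 2^(a+1)\<close>, and any \<open>n \<le> 2^a m\<close> is \<open>q m + r\<close> with
  \<open>q \<le> 2^a\<close>, \<open>r < 2^(a+1)\<close>, so writing \<open>q\<close> and \<open>r\<close> in binary expresses \<open>n\<close> through the
  divisors \<open>m 2^i\<close> and \<open>2^i\<close>.

  If \<open>2^e m\<close> (\<open>m > 1\<close> odd) is practical, then \<open>m\<close> has a divisor in \<open>(1, 2^(e+1)]\<close>,
  since otherwise the divisors up to \<open>2^(e+1)\<close> only add up to \<open>2^(e+1) - 1\<close>. For \<open>n\<close> in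
  suitable residue classes modulo \<open>240240 = 16\<cdot>3\<cdot>5\<cdot>7\<cdot>11\<cdot>13\<close>, quadratic residues force
  \<open>P = n - x\<^sup>2\<close> to be prime to \<open>3\<cdot>5\<cdot>7\<cdot>11\<cdot>13\<close>, not divisible by 16 and not a power of 2,
  so its odd part has no divisor in \<open>(1, 16]\<close>. Such classes meet every class \<open>j \<noteq> 1\<close>
  modulo 8.
\<close>

lemma practical_pos: "practical P \<Longrightarrow> 0 < P"
  by (simp add: practical_def)

lemma practical_le_sum_small_divisors:
  assumes "practical P" "q \<le> P"
  shows "q \<le> \<Sum>{d. d dvd P \<and> d \<le> q}"
proof (cases "q = 0")
  case False
  with assms(2) have "q \<in> {1..P}"
    by simp
  with assms(1) obtain S where S: "S \<subseteq> {d. d > 0 \<and> d dvd P}" "\<Sum>S = q"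
    unfolding practical_def by blast
  have "S \<subseteq> {d. d dvd P}"
    using S(1) by blast
  then have "finite S"
    by (rule finite_subset) (simp add: practical_pos[OF assms(1)])
  have "S \<subseteq> {d. d dvd P \<and> d \<le> q}"
  proof
    fix d assume "d \<in> S"
    with \<open>finite S\<close> have "d \<le> \<Sum>S"
      using member_le_sum[of d S id] by simp
    with S \<open>d \<in> S\<close> show "d \<in> {d. d dvd P \<and> d \<le> q}"
      by blast
  qed
  moreover have "finite {d. d dvd P \<and> d \<le> q}"
    by (rule finite_subset[of _ "{..q}"]) auto
  ultimately show ?thesis
    using S(2) by (metis sum_mono2 zero_le)
qed simp

lemma practical_odd_part_has_small_divisor:
  assumes prac: "practical (2^e * m)" and "odd m" "1 < m"
  shows "\<exists>d. d dvd m \<and> 1 < d \<and> d \<le> 2^(e+1)"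
proof (rule ccontr)
  assume no_small: "\<nexists>d. d dvd m \<and> 1 < d \<and> d \<le> 2^(e+1)"
  have "{d. d dvd 2^e * m \<and> d \<le> 2^(e+1)} \<subseteq> (\<lambda>i. 2^i) ` {0..<e+1}"
  proof clarify
    fix d assume d: "d dvd 2^e * m" "d \<le> 2^(e+1)"
    then obtain u v where uv: "d = u * v" "u dvd 2^e" "v dvd m"
      using division_decomp by blast
    have "d \<noteq> 0"
      using d(1) \<open>odd m\<close> by (intro notI) simp
    then have "v \<le> d"
      using uv(1) by (simp add: dvd_imp_le)
    then have "v \<le> 2^(e+1)"
      using d(2) by simp
    moreover have "v \<noteq> 0"
      using uv(1) \<open>d \<noteq> 0\<close> by simp
    ultimately have "v = 1"
      using no_small uv(3) by (metis less_one nat_neq_iff)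
    then show "d \<in> (\<lambda>i. 2^i) ` {0..<e+1}"
      using uv divides_primepow_nat[of 2 u e] by auto
  qed
  then have "\<Sum>{d. d dvd 2^e * m \<and> d \<le> 2^(e+1)} \<le> \<Sum>((\<lambda>i. 2^i) ` {0..<e+1})"
    by (rule sum_mono2[rotated]) simp_all
  also have "\<dots> = (\<Sum>i=0..<e+1. 2^i)"
    by (subst sum.reindex) (auto simp: inj_on_def)
  also have "\<dots> < 2^(e+1)"
    unfolding sum_power2 by (rule diff_less) simp_all
  finally have "\<Sum>{d. d dvd 2^e * m \<and> d \<le> 2^(e+1)} < 2^(e+1)" .
  moreover have "2^(e+1) \<le> 2^e * m"
    using \<open>1 < m\<close> by simp
  then have "2^(e+1) \<le> \<Sum>{d. d dvd 2^e * m \<and> d \<le> 2^(e+1)}"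
    by (rule practical_le_sum_small_divisors[OF prac])
  ultimately show False
    by (blast dest: leD)
qed

lemma square_mod_in_residues:
  fixes x m :: nat
  assumes "0 < m" "\<forall>r\<in>{..<m}. r^2 mod m \<in> R"
  shows "x^2 mod m \<in> R"
  using assms mod_less_divisor power_mod by (metis lessThan_iff)

lemma squares_mod_small_moduli:
  fixes x :: nat
  shows "x^2 mod 3 \<in> {0,1}" "x^2 mod 5 \<in> {0,1,4}" "x^2 mod 7 \<in> {0,1,2,4}"
    "x^2 mod 11 \<in> {0,1,3,4,5,9}" "x^2 mod 13 \<in> {0,1,3,4,9,10,12}" "x^2 mod 16 \<in> {0,1,4,9}"
  by (rule square_mod_in_residues; simp add: lessThan_nat_numeral)+

lemma odd_le_16_has_prime_factor_le_13:
  fixes d :: nat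
  assumes "odd d" "1 < d" "d \<le> 16"
  shows "3 dvd d \<or> 5 dvd d \<or> 7 dvd d \<or> 11 dvd d \<or> 13 dvd d"
proof -
  have "\<forall>d\<in>{..<17::nat}. odd d \<longrightarrow> 1 < d \<longrightarrow> 3 dvd d \<or> 5 dvd d \<or> 7 dvd d \<or> 11 dvd d \<or> 13 dvd d"
    by (simp add: lessThan_nat_numeral)
  with assms show ?thesis
    by simp
qed

lemma not_square_plus_practical:
  fixes n x P :: nat
  assumes "practical P"
    and "n mod 16 \<notin> {0,1,4,9}" "n mod 3 = 2" "n mod 5 = 2" "n mod 7 = 3" "n mod 11 = 10" "n mod 13 = 7"
  shows "n \<noteq> x^2 + P"
proof
  assume n: "n = x^2 + P"
  have mod_n: "(x^2 mod p + P mod p) mod p = n mod p" for p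
    by (simp add: n mod_add_eq)
  note sq = squares_mod_small_moduli[of x]
  have not_dvd_3: "\<not> 3 dvd P"
    using mod_n[of 3] sq(1) assms(3) by auto
  have not_dvd_5: "\<not> 5 dvd P"
    using mod_n[of 5] sq(2) assms(4) by auto
  have not_dvd_7: "\<not> 7 dvd P"
    using mod_n[of 7] sq(3) assms(5) by auto
  have not_dvd_11: "\<not> 11 dvd P"
    using mod_n[of 11] sq(4) assms(6) by auto
  have not_dvd_13: "\<not> 13 dvd P"
    using mod_n[of 13] sq(5) assms(7) by auto
  have not_dvd_16: "\<not> 16 dvd P"
    using mod_n[of 16] sq(6) assms(2) by auto
  have not_pow2: "P \<notin> {1,2,4,8}"
    using mod_n[of 11] mod_n[of 13] sq(4,5) assms(6,7) by auto
  define e where "e = multiplicity 2 P"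
  obtain m where m: "P = 2^e * m" "odd m"
    using multiplicity_decompose'[of P 2] practical_pos[OF assms(1)] unfolding e_def by auto
  have "e \<le> 3"
  proof (rule ccontr)
    assume "\<not> e \<le> 3"
    then have "(2::nat)^4 dvd 2^e"
      by (intro le_imp_power_dvd) simp
    then have "2^4 dvd P"
      using m(1) by (metis dvd_mult2)
    with not_dvd_16 show False
      by simp
  qed
  have "1 < m"
  proof (rule ccontr)
    assume "\<not> 1 < m"
    with odd_pos[OF m(2)] have "m = 1"
      by linarith
    moreover have "e = 0 \<or> e = 1 \<or> e = 2 \<or> e = 3"
      using \<open>e \<le> 3\<close> by linarith
    ultimately show False
      using m(1) not_pow2 by auto
  qed
  with assms(1) m obtain d where d: "d dvd m" "1 < d" "d \<le> 2^(e+1)"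
    using practical_odd_part_has_small_divisor[of e m] by auto
  have "odd d"
    using d(1) m(2) dvd_trans by blast
  moreover have "d \<le> 16"
    using d(3) power_increasing[of "e+1" 4 "2::nat"] \<open>e \<le> 3\<close> by simp
  moreover have "d dvd P"
    using d(1) m(1) by (metis dvd_mult)
  ultimately show False
    using odd_le_16_has_prime_factor_le_13[of d] d(2)
      not_dvd_3 not_dvd_5 not_dvd_7 not_dvd_11 not_dvd_13 dvd_trans
    by blast
qed

lemma subset_sum_powers_of_two:
  fixes n k :: nat
  assumes "n < 2^k"
  shows "\<exists>S \<subseteq> (\<lambda>i. 2^i) ` {..<k}. \<Sum>S = n"
  using assms
proof (induction k arbitrary: n)
  case 0
  then show ?case
    by auto
next
  case (Suc k)
  show ?case
  proof (cases "n < 2^k")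
    case True
    with Suc.IH obtain S where "S \<subseteq> (\<lambda>i. 2^i) ` {..<k}" "\<Sum>S = n"
      by blast
    then show ?thesis
      by (intro exI[of _ S]) auto
  next
    case False
    with Suc.prems have "n - 2^k < 2^k"
      by simp
    with Suc.IH obtain S where S: "S \<subseteq> (\<lambda>i. 2^i) ` {..<k}" "\<Sum>S = n - 2^k"
      by blast
    have "finite S" "2^k \<notin> S"
      using S(1) finite_subset by auto
    with S(2) False have "\<Sum>(insert (2^k) S) = n"
      by simp
    moreover have "insert (2^k) S \<subseteq> (\<lambda>i. 2^i) ` {..<Suc k}"
      using S(1) by auto
    ultimately show ?thesis
      by blast
  qed
qed

lemma practical_two_pow_mult_odd:
  fixes a m :: nat
  assumes "odd m" "m \<le> 2^(a+1)"
  shows "practical (2^a * m)"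
  unfolding practical_def
proof (intro conjI ballI)
  have "0 < m"
    using assms(1) by (rule odd_pos)
  then show "0 < 2^a * m"
    by simp
  let ?T = "(\<lambda>i. 2^i) ` {..<a+1} :: nat set"
  fix n assume "n \<in> {1..2^a * m}"
  then have "n div m \<le> 2^a"
    using \<open>0 < m\<close> by (metis atLeastAtMost_iff div_le_mono nonzero_mult_div_cancel_right not_gr0)
  then obtain Q where Q: "Q \<subseteq> ?T" "\<Sum>Q = n div m"
    using subset_sum_powers_of_two[of "n div m" "a+1"] by fastforce
  have "n mod m < 2^(a+1)"
    using \<open>0 < m\<close> assms(2) by (meson mod_less_divisor order_less_le_trans)
  then obtain R where R: "R \<subseteq> ?T" "\<Sum>R = n mod m"
    using subset_sum_powers_of_two by blast
  have "finite Q" "finite R"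
    using Q(1) R(1) by (meson finite_imageI finite_lessThan finite_subset)+
  have T_dvd: "t dvd 2^a" if "t \<in> ?T" for t
    using that by (auto intro: le_imp_power_dvd)
  have disjoint: "(*) m ` Q \<inter> R = {}"
  proof (cases "m = 1")
    case True
    then have "\<Sum>R = 0"
      using R(2) by simp
    then have "R = {}"
      using \<open>finite R\<close> R(1) by auto
    then show ?thesis
      by simp
  next
    case False
    have "m * 2^i \<noteq> 2^j" for i j :: nat
    proof
      assume "m * 2^i = 2^j"
      then have "m dvd 2^j"
        by (metis dvd_triv_left)
      moreover have "coprime m (2^j)"
        using assms(1) by simp
      ultimately have "m dvd 1"
        using coprime_absorb_left by blast
      with False show False
        by simp
    qed
    then show ?thesis
      using Q(1) R(1) by blast
  qed
  let ?S = "(*) m ` Q \<union> R"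
  have "?S \<subseteq> {d. d > 0 \<and> d dvd 2^a * m}"
    using Q(1) R(1) T_dvd \<open>0 < m\<close> by (fastforce intro: dvd_mult2 mult_dvd_mono)
  moreover have "\<Sum>?S = n"
  proof -
    have "\<Sum>?S = \<Sum>((*) m ` Q) + \<Sum>R"
      using disjoint \<open>finite Q\<close> \<open>finite R\<close> by (simp add: sum.union_disjoint)
    also have "\<dots> = m * \<Sum>Q + \<Sum>R"
      using \<open>0 < m\<close> by (simp add: sum.reindex inj_on_def sum_distrib_left)
    also have "\<dots> = n"
      using Q(2) R(2) by simp
    finally show ?thesis .
  qed
  ultimately show "\<exists>S. S \<subseteq> {d. d > 0 \<and> d dvd 2^a * m} \<and> \<Sum>S = n"
    by blast
qed

lemma practical_if_two_power_dvd:
  fixes a P :: nat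
  assumes "0 < P" "2^a dvd P" "P \<le> 2^(2*a+1)"
  shows "practical P"
proof -
  define b where "b = multiplicity 2 P"
  obtain m where m: "P = 2^b * m" "odd m"
    using multiplicity_decompose'[of P 2] assms(1) unfolding b_def by auto
  have "a \<le> b"
    using assms(1,2) unfolding b_def by (simp add: power_dvd_iff_le_multiplicity)
  have "2^b * m \<le> 2^(2*a+1)"
    using assms(3) m(1) by simp
  also have "\<dots> \<le> 2^(2*b+1)"
    using \<open>a \<le> b\<close> by (intro power_increasing) simp_all
  also have "\<dots> = 2^b * 2^(b+1)"
    by (simp flip: power_add)
  finally have "m \<le> 2^(b+1)"
    by simp
  with m show ?thesis
    using practical_two_pow_mult_odd by simp
qed

lemma odd_square_root_mod_two_power:
  fixes N :: int
  assumes "N mod 8 = 1"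
  shows "\<exists>x. odd x \<and> 2^a dvd N - x^2"
proof (induction a)
  case 0
  show ?case
    by (intro exI[of _ 1]) simp
next
  case (Suc a)
  then obtain x where "odd x" "2^a dvd N - x^2"
    by blast
  then obtain c where x: "odd x" "N - x^2 = 2^a * c"
    by blast
  consider "a < 3" | "even c" | k where "a = k + 3" "odd c"
    by (metis add.commute le_Suc_ex not_less)
  then show ?case
  proof cases
    case 1
    then have "(2::int)^Suc a dvd 2^3"
      by (intro le_imp_power_dvd) simp
    moreover have "(2::int)^3 dvd N - 1^2"
      using assms mod_eq_dvd_iff[of N 8 1] by simp
    ultimately show ?thesis
      by (intro exI[of _ 1]) (auto intro: dvd_trans)
  next
    case 2
    then obtain c' where "c = 2 * c'"
      by blast
    with x have "N - x^2 = 2^Suc a * c'"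
      by simp
    with x(1) show ?thesis
      by (metis dvd_triv_left)
  next
    case 3
    text \<open>Adding \<open>2^(a-1)\<close> to the odd root changes its square by \<open>2^a\<close> modulo \<open>2^(a+1)\<close>.\<close>
    have "even (c - x)"
      using 3(2) x(1) by simp
    then obtain u where u: "c - x = 2 * u"
      by blast
    have "N - (x + 2^(k+2))^2 = 2^Suc a * (u - 2^k)"
      using x(2) u 3(1) by (simp add: power2_eq_square power_add algebra_simps)
    moreover have "odd (x + 2^(k+2))"
      using x(1) by simp
    ultimately show ?thesis
      by (metis dvd_triv_left)
  qed
qed

lemma square_mod_two_power_cong:
  fixes x :: int
  shows "2^(k+2) dvd x^2 - (x mod 2^(k+1))^2"
proof -
  define y q where "y = x mod 2^(k+1)" and "q = x div 2^(k+1)"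
  have "x = y + q * 2^(k+1)"
    unfolding y_def q_def by (rule mod_div_mult_eq[symmetric])
  then have "x^2 - y^2 = 2^(k+2) * (y * q + q^2 * 2^k)"
    by (simp add: power2_eq_square power_add algebra_simps)
  then show ?thesis
    unfolding y_def by simp
qed

lemma small_square_root_mod_two_power:
  fixes N :: nat
  assumes "N mod 8 = 1"
  shows "\<exists>x::nat. x < 2^(k+1) \<and> 2^(k+2) dvd int N - int x^2"
proof -
  have "int N mod 8 = 1"
    using assms by (metis of_nat_1 of_nat_mod of_nat_numeral)
  then obtain x where "2^(k+2) dvd int N - x^2"
    using odd_square_root_mod_two_power by blast
  then have "2^(k+2) dvd (int N - x^2) + (x^2 - (x mod 2^(k+1))^2)"
    using square_mod_two_power_cong by (rule dvd_add)
  moreover have "0 \<le> x mod 2^(k+1)" "x mod 2^(k+1) < 2^(k+1)"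
    by simp_all
  ultimately show ?thesis
    by (intro exI[of _ "nat (x mod 2^(k+1))"]) (simp add: nat_less_iff)
qed

lemma exists_power_bracket:
  fixes c N :: nat
  assumes "2 \<le> c" "c < N"
  shows "\<exists>b. c^(b+1) < N \<and> N \<le> c^(b+2)"
proof -
  have "1 \<le> N - 1"
    using assms by linarith
  then obtain k where k: "c^k \<le> N - 1" "N - 1 < c^(k+1)"
    using ex_power_ivl1[OF assms(1)] by blast
  have "k \<noteq> 0"
    using k(2) assms(2) by (intro notI) simp
  then obtain b where "k = b + 1"
    by (metis Suc_eq_plus1 not0_implies_Suc)
  with k \<open>1 \<le> N - 1\<close> show ?thesis
    by (intro exI[of _ b]) auto
qed

lemma square_plus_practical_if_one_mod_eight:
  fixes N :: nat
  assumes "N mod 8 = 1"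
  shows "\<exists>x P. practical P \<and> N = x^2 + P"
proof (cases "N = 1")
  case True
  have "practical (2^0 * 1)"
    by (rule practical_two_pow_mult_odd) simp_all
  with True show ?thesis
    by (intro exI[of _ 0] exI[of _ 1]) simp
next
  case False
  with assms have "4 < N"
    by presburger
  then obtain b where b: "4^(b+1) < N" "N \<le> 4^(b+2)"
    using exists_power_bracket[of 4 N] by auto
  obtain x where x: "x < 2^(b+1)" "2^(b+2) dvd int N - int x^2"
    using small_square_root_mod_two_power[OF assms] by blast
  have "x^2 < (2^(b+1))^2"
    using x(1) by (rule power_strict_mono) simp_all
  also have "(2^(b+1))^2 = (4::nat)^(b+1)"
    by (simp flip: power_mult_distrib add: power2_eq_square)
  finally have "x^2 < N"
    using b(1) by linarith
  define P where "P = N - x^2"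
  have "int P = int N - int x^2"
    using \<open>x^2 < N\<close> by (simp add: P_def)
  with x(2) have "2^(b+2) dvd P"
    by (metis of_nat_dvd_iff of_nat_numeral of_nat_power)
  moreover have "P \<le> 2^(2*(b+2)+1)"
  proof -
    have "P \<le> 4^(b+2)"
      using b(2) by (simp add: P_def)
    also have "(4::nat)^(b+2) = 2^(2*(b+2))"
      by (simp add: power_mult)
    also have "\<dots> \<le> 2^(2*(b+2)+1)"
      by (rule power_increasing) simp_all
    finally show ?thesis .
  qed
  moreover have "0 < P"
    using \<open>x^2 < N\<close> by (simp add: P_def)
  ultimately have "practical P"
    using practical_if_two_power_dvd by blast
  moreover have "N = x^2 + P"
    using \<open>x^2 < N\<close> by (simp add: P_def)
  ultimately show ?thesis
    by blast
qed

lemma infinite_not_square_plus_practical: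
  fixes k\<^sub>0 j :: nat
  defines "r \<equiv> 8 * k\<^sub>0 + j"
  assumes "r mod 16 \<notin> {0,1,4,9}" "r mod 3 = 2" "r mod 5 = 2" "r mod 7 = 3" "r mod 11 = 10"
    "r mod 13 = 7"
  shows "infinite {k. \<not> (\<exists>x P. practical P \<and> 8 * k + j = x\<^sup>2 + P)}"
proof -
  let ?k = "\<lambda>t::nat. 30030 * t + k\<^sub>0"
  have mod_r: "(240240 * t + r) mod p = r mod p" if "p dvd 240240" for p t :: nat
    using that by (metis add.commute dvd_def mod_mult_self2 mult.assoc)
  have not_rep: "240240 * t + r \<noteq> x\<^sup>2 + P" if "practical P" for t x P
    using not_square_plus_practical[OF that] assms(2-7) mod_r[of 16] mod_r[of 3] mod_r[of 5]
      mod_r[of 7] mod_r[of 11] mod_r[of 13]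
    by simp
  have k_eq: "8 * ?k t + j = 240240 * t + r" for t
    unfolding r_def by simp
  have "?k t \<in> {k. \<not> (\<exists>x P. practical P \<and> 8 * k + j = x\<^sup>2 + P)}" for t
    using not_rep unfolding mem_Collect_eq k_eq by blast
  then have "range ?k \<subseteq> {k. \<not> (\<exists>x P. practical P \<and> 8 * k + j = x\<^sup>2 + P)}"
    by blast
  moreover have "inj ?k"
    by (intro injI) simp
  ultimately show ?thesis
    using infinite_iff_countable_subset by blast
qed

theorem theorem3p3:
  shows "(\<forall>N::nat. N > 0 \<and> N mod 8 = 1 \<longrightarrow> (\<exists>x P. practical P \<and> N = x\<^sup>2 + P))
       \<and> (\<forall>j\<in>{0,2,3,4,5,6,7::nat}.
            infinite {k::nat. \<not> (\<exists>x P. practical P \<and> 8 * k + j = x\<^sup>2 + P)})"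
proof (intro conjI allI impI ballI)
  show "\<exists>x P. practical P \<and> N = x\<^sup>2 + P" if "N > 0 \<and> N mod 8 = 1" for N :: nat
    using that square_plus_practical_if_one_mod_eight by blast
  show "infinite {k. \<not> (\<exists>x P. practical P \<and> 8 * k + j = x\<^sup>2 + P)}"
    if "j \<in> {0,2,3,4,5,6,7}" for j :: nat
    using that
      infinite_not_square_plus_practical[of 23929 0] infinite_not_square_plus_practical[of 5160 2]
      infinite_not_square_plus_practical[of 18298 3] infinite_not_square_plus_practical[of 16421 4]
      infinite_not_square_plus_practical[of 14544 5] infinite_not_square_plus_practical[of 27682 6]
      infinite_not_square_plus_practical[of 10790 7]
    by auto
qed

end
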